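(* Let $\mathcal{A}$ be a fixed (non-random) partition of $\Theta$ into measurable sets, and let $(\theta_1,\mathbf{X}_1),\dots,(\theta_B,\mathbf{X}_B),(\theta,\mathbf{X})$ be i.i.d. pairs with $\theta_b \sim r$ and $\mathbf{X}_b \mid \theta_b$ distributed according to the statistical model at $\theta_b$ (and likewise for $(\theta,\mathbf{X})$). Fix $A \in \mathcal{A}$ with $\mathbb{P}(\theta \in A) > 0$ and $\alpha\in(0,1)$. Let $I_A = \{b \in \{1,\dots,B\} : \theta_b \in A\}$, define for $t\in\mathbb{R}$ $$\widehat H_B(t \mid A) = \frac{1}{|I_A|+1}\Big(\sum_{b \in I_A} \mathbb{I}\big(\tau(\mathbf{X}_b,\theta_b) \le t\big) + 1\Big),$$ and let $\widehat C_{A,B} = \inf\{t \in \mathbb{R} : \widehat H_B(t\mid A) \ge \alpha\}$ (the adjusted $\alpha$-quantile; possibly $-\infty$). For $\theta' \in A$ set $\widehat C_{\theta',B} := \widehat C_{A,B}$, and let $\widehat R_B(\mathbf{X}) = \{\theta' \in \Theta : \tau(\mathbf{X},\theta') \ge \widehat C_{\theta',B}\}$. Then $$\mathbb{P}\big(\theta \in \widehat R_B(\mathbf{X}) \mid \theta \in A\big) \ge 1-\alpha,$$ where the probability is over both the simulated data and the new pair $(\theta,\mathbf{X})$.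
   Context: A statistical model gives, for each parameter $\theta \in \Theta$, a distribution of the data $\mathbf{X}\in\mathcal{X}$; $r$ is a reference probability distribution on $\Theta$. A fixed measurable function $\tau : \mathcal{X}\times\Theta \to \mathbb{R}$ (a test statistic) is given, and for every $\theta$ the conditional distribution of $\tau(\mathbf{X},\theta)$ given $\theta$ is continuous (has no atoms). *)

theory Defs
  imports "HOL-Probability.Probability"
begin

definition joint_law ::
  "'t measure \<Rightarrow> 'x measure \<Rightarrow> ('t \<Rightarrow> 'x measure) \<Rightarrow> ('t \<times> 'x) measure" where
  "joint_law r MX K = r \<bind> (\<lambda>\<theta>. distr (K \<theta>) (r \<Otimes>\<^sub>M MX) (\<lambda>x. (\<theta>, x)))"

definition sample_space ::
  "'t measure \<Rightarrow> 'x measure \<Rightarrow> ('t \<Rightarrow> 'x measure) \<Rightarrow> nat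
     \<Rightarrow> ((nat \<Rightarrow> 't \<times> 'x) \<times> ('t \<times> 'x)) measure" where
  "sample_space r MX K B =
     (\<Pi>\<^sub>M b\<in>{1..B}. joint_law r MX K) \<Otimes>\<^sub>M joint_law r MX K"

definition I_set :: "nat \<Rightarrow> 't set \<Rightarrow> (nat \<Rightarrow> 't \<times> 'x) \<Rightarrow> nat set" where
  "I_set B A s = {b \<in> {1..B}. fst (s b) \<in> A}"

definition H_hat ::
  "('x \<Rightarrow> 't \<Rightarrow> real) \<Rightarrow> nat \<Rightarrow> 't set \<Rightarrow> (nat \<Rightarrow> 't \<times> 'x) \<Rightarrow> real \<Rightarrow> real" where
  "H_hat \<tau> B A s t =
     (1 / (real (card (I_set B A s)) + 1)) *
     ((\<Sum>b\<in>I_set B A s. if \<tau> (snd (s b)) (fst (s b)) \<le> t then 1 else 0) + 1)"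

definition C_hat ::
  "('x \<Rightarrow> 't \<Rightarrow> real) \<Rightarrow> real \<Rightarrow> nat \<Rightarrow> 't set \<Rightarrow> (nat \<Rightarrow> 't \<times> 'x) \<Rightarrow> ereal" where
  "C_hat \<tau> \<alpha> B A s = Inf {ereal t | t. H_hat \<tau> B A s t \<ge> \<alpha>}"

definition cell :: "'t set set \<Rightarrow> 't \<Rightarrow> 't set" where
  "cell \<A> \<theta>' = (THE A. A \<in> \<A> \<and> \<theta>' \<in> A)"

definition R_hat ::
  "'t measure \<Rightarrow> 't set set \<Rightarrow> ('x \<Rightarrow> 't \<Rightarrow> real) \<Rightarrow> real \<Rightarrow> nat
     \<Rightarrow> (nat \<Rightarrow> 't \<times> 'x) \<Rightarrow> 'x \<Rightarrow> 't set" where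
  "R_hat r \<A> \<tau> \<alpha> B s x =
     {\<theta>' \<in> space r. ereal (\<tau> x \<theta>') \<ge> C_hat \<tau> \<alpha> B (cell \<A> \<theta>') s}"

end

theory Submission
  imports Defs
begin

text \<open>
  Put the new pair at index \<open>0\<close> next to the simulated pairs \<open>1, \<dots>, B\<close>; the \<open>B + 1\<close> pairs
  are i.i.d., hence exchangeable. Among the indices whose parameter lies in \<open>A\<close>, the new
  parameter lies in \<open>A\<close> but outside \<open>R_hat\<close> exactly when the score of index \<open>0\<close> is a rank
  outlier: fewer than \<open>\<alpha> n - 1\<close> of the other \<open>n - 1\<close> scores in \<open>A\<close> lie weakly below it.
  Deterministically at most \<open>\<alpha> n\<close> indices are rank outliers, and by exchangeability every
  index is one with the same probability, so the joint probability of \<open>\<theta> \<in> A\<close> and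
  non-coverage is at most \<open>\<alpha> P(\<theta> \<in> A)\<close>.
\<close>

lemma pred_PiM_component:
  assumes "i \<in> I" and "Measurable.pred J P"
  shows "Measurable.pred (\<Pi>\<^sub>M i\<in>I. J) (\<lambda>f. P (f i))"
  using measurable_compose[OF measurable_component_singleton[OF assms(1)] assms(2)] .

lemma borel_measurable_card_filter:
  assumes "finite I" and "\<And>i. i \<in> I \<Longrightarrow> Measurable.pred M (\<phi> i)"
  shows "(\<lambda>x. real (card {i \<in> I. \<phi> i x})) \<in> borel_measurable M"
proof -
  have "(\<lambda>x. \<Sum>i\<in>I. of_bool (\<phi> i x) :: real) \<in> borel_measurable M"
    using assms(2) by (intro borel_measurable_sum) (simp add: measurable_If)
  moreover have "(\<Sum>i\<in>I. of_bool (\<phi> i x) :: real) = real (card {i \<in> I. \<phi> i x})" for x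
    using assms(1) by (simp add: Int_def)
  ultimately show ?thesis by simp
qed

lemma measure_PiM_component_pred:
  assumes J: "prob_space J" and i: "i \<in> I" and P_meas: "Measurable.pred J P"
  shows "measure (\<Pi>\<^sub>M i\<in>I. J) {f \<in> space (\<Pi>\<^sub>M i\<in>I. J). P (f i)} = measure J {p \<in> space J. P p}"
proof -
  interpret product_prob_space "\<lambda>_. J" I using J by (rule product_prob_spaceI)
  have eq: "{f \<in> space (\<Pi>\<^sub>M i\<in>I. J). P (f i)} = {f \<in> space (\<Pi>\<^sub>M i\<in>I. J). f i \<in> {p \<in> space J. P p}}"
    using i by (auto simp: space_PiM)
  have sets_P: "{p \<in> space J. P p} \<in> sets J" using P_meas unfolding pred_def .
  show ?thesis
    unfolding measure_def eq emeasure_PiM_Collect_single[OF i sets_P] ..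
qed

lemma measure_PiM_permute:
  assumes J: "prob_space J" and \<pi>: "bij_betw \<pi> I I" and E: "E \<in> sets (\<Pi>\<^sub>M i\<in>I. J)"
  shows "measure (\<Pi>\<^sub>M i\<in>I. J) ((\<lambda>f. \<lambda>n\<in>I. f (\<pi> n)) -` E \<inter> space (\<Pi>\<^sub>M i\<in>I. J))
       = measure (\<Pi>\<^sub>M i\<in>I. J) E"
proof -
  have \<pi>I: "\<pi> \<in> I \<rightarrow> I" using \<pi> by (auto dest: bij_betwE)
  have meas: "(\<lambda>f. \<lambda>n\<in>I. f (\<pi> n)) \<in> (\<Pi>\<^sub>M i\<in>I. J) \<rightarrow>\<^sub>M (\<Pi>\<^sub>M i\<in>I. J)"
    using \<pi>I by (intro measurable_restrict measurable_component_singleton) auto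
  have "distr (\<Pi>\<^sub>M i\<in>I. J) (\<Pi>\<^sub>M i\<in>I. J) (\<lambda>f. \<lambda>n\<in>I. f (\<pi> n)) = (\<Pi>\<^sub>M i\<in>I. J)"
    using distr_PiM_reindex[of I "\<lambda>_. J", OF J bij_betw_imp_inj_on[OF \<pi>] \<pi>I] .
  then show ?thesis
    using measure_distr[OF meas E] by simp
qed

lemma distr_PiM_pair_fun_upd:
  assumes M: "\<And>i. i \<in> I \<Longrightarrow> prob_space (M i)" "prob_space (M i')"
  shows "distr ((\<Pi>\<^sub>M i\<in>I. M i) \<Otimes>\<^sub>M M i') (\<Pi>\<^sub>M i\<in>insert i' I. M i) (\<lambda>(X, x). X(i' := x)) =
    (\<Pi>\<^sub>M i\<in>insert i' I. M i)"
proof -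
  interpret I: prob_space "\<Pi>\<^sub>M i\<in>I. M i" using M(1) by (rule prob_space_PiM)
  interpret pair_sigma_finite "\<Pi>\<^sub>M i\<in>I. M i" "M i'"
    using M(2) by (intro pair_sigma_finite.intro I.sigma_finite_measure_axioms prob_space_imp_sigma_finite)
  have "distr ((\<Pi>\<^sub>M i\<in>I. M i) \<Otimes>\<^sub>M M i') (\<Pi>\<^sub>M i\<in>insert i' I. M i) (\<lambda>(X, x). X(i' := x))
      = distr (distr (M i' \<Otimes>\<^sub>M (\<Pi>\<^sub>M i\<in>I. M i)) ((\<Pi>\<^sub>M i\<in>I. M i) \<Otimes>\<^sub>M M i') (\<lambda>(x, y). (y, x)))
          (\<Pi>\<^sub>M i\<in>insert i' I. M i) (\<lambda>(X, x). X(i' := x))"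
    by (simp only: distr_pair_swap[symmetric])
  also have "\<dots> = distr (M i' \<Otimes>\<^sub>M (\<Pi>\<^sub>M i\<in>I. M i)) (\<Pi>\<^sub>M i\<in>insert i' I. M i) (\<lambda>(x, X). X(i' := x))"
    by (subst distr_distr) (auto intro: measurable_add_dim measurable_pair_swap' simp: comp_def case_prod_unfold)
  also have "\<dots> = (\<Pi>\<^sub>M i\<in>insert i' I. M i)"
    using M by (rule distr_pair_PiM_eq_PiM)
  finally show ?thesis .
qed

definition rank_outlier ::
  "real \<Rightarrow> ('a \<Rightarrow> bool) \<Rightarrow> ('a \<Rightarrow> real) \<Rightarrow> 'i set \<Rightarrow> ('i \<Rightarrow> 'a) \<Rightarrow> 'i \<Rightarrow> bool" where
  "rank_outlier \<alpha> P S I f j \<longleftrightarrow>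
     P (f j) \<and>
     real (card {i \<in> I - {j}. P (f i) \<and> S (f i) \<le> S (f j)}) + 1 < \<alpha> * real (card {i \<in> I. P (f i)})"

text \<open>All outliers score at most as high as the highest-scoring outlier \<open>j0\<close>, so they lie among
  \<open>j0\<close> and the fewer than \<open>\<alpha> n - 1\<close> indices counted in its rank.\<close>
lemma card_rank_outliers_le:
  assumes "finite I" and "0 \<le> \<alpha>"
  shows "real (card {j \<in> I. rank_outlier \<alpha> P S I f j}) \<le> \<alpha> * real (card {i \<in> I. P (f i)})"
proof (cases "{j \<in> I. rank_outlier \<alpha> P S I f j} = {}")
  case True
  then show ?thesis using assms(2) by (simp only: True card.empty) simp
next
  case False
  let ?G = "{j \<in> I. rank_outlier \<alpha> P S I f j}"
  have fin: "finite ?G" using assms(1) by simp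
  have "Max ((\<lambda>j. S (f j)) ` ?G) \<in> (\<lambda>j. S (f j)) ` ?G"
    using fin False by simp
  then obtain j0 where j0: "j0 \<in> ?G" and "Max ((\<lambda>j. S (f j)) ` ?G) = S (f j0)"
    by blast
  then have max: "S (f j) \<le> S (f j0)" if "j \<in> ?G" for j
    using Max_ge[OF finite_imageI[OF fin] imageI[OF that, of "\<lambda>j. S (f j)"]] by simp
  have "?G \<subseteq> insert j0 {i \<in> I - {j0}. P (f i) \<and> S (f i) \<le> S (f j0)}"
    using max by (auto simp: rank_outlier_def)
  then have "card ?G \<le> card (insert j0 {i \<in> I - {j0}. P (f i) \<and> S (f i) \<le> S (f j0)})"
    by (rule card_mono[rotated]) (use assms(1) in simp)
  also have "\<dots> = card {i \<in> I - {j0}. P (f i) \<and> S (f i) \<le> S (f j0)} + 1"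
    using assms(1) by simp
  finally show ?thesis
    using j0 by (simp add: rank_outlier_def)
qed

lemma rank_outlier_reindex:
  assumes \<pi>: "bij_betw \<pi> I I" and j: "j \<in> I"
  shows "rank_outlier \<alpha> P S I (\<lambda>n\<in>I. f (\<pi> n)) j = rank_outlier \<alpha> P S I f (\<pi> j)"
proof -
  have card_reindex: "card {i \<in> I - X. \<phi> ((\<lambda>n\<in>I. f (\<pi> n)) i)} = card {i \<in> I - \<pi> ` X. \<phi> (f i)}"
    if "X \<subseteq> I" for X \<phi>
  proof -
    have inj: "inj_on \<pi> I" and surj: "\<pi> ` I = I"
      using \<pi> by (auto simp: bij_betw_def)
    have "card {i \<in> I - X. \<phi> ((\<lambda>n\<in>I. f (\<pi> n)) i)} = card {i \<in> I - X. \<phi> (f (\<pi> i))}"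
      by (rule arg_cong[where f = card]) auto
    also have "\<dots> = card (\<pi> ` {i \<in> I - X. \<phi> (f (\<pi> i))})"
      by (rule card_image[symmetric], rule inj_on_subset[OF inj]) auto
    also have "\<pi> ` {i \<in> I - X. \<phi> (f (\<pi> i))} = {i \<in> \<pi> ` (I - X). \<phi> (f i)}"
      by blast
    also have "\<pi> ` (I - X) = I - \<pi> ` X"
      using inj_on_image_set_diff[OF inj Diff_subset that] surj by simp
    finally show ?thesis .
  qed
  show ?thesis
    using card_reindex[of "{j}" "\<lambda>y. P y \<and> S y \<le> S (f (\<pi> j))"] card_reindex[of "{}" P] j
    by (simp add: rank_outlier_def)
qed

lemma pred_rank_outlier:
  assumes fin: "finite I" and j: "j \<in> I"
    and P: "Measurable.pred J P" and S: "S \<in> borel_measurable J"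
  shows "Measurable.pred (\<Pi>\<^sub>M i\<in>I. J) (\<lambda>f. rank_outlier \<alpha> P S I f j)"
proof -
  have S_at: "(\<lambda>f. S (f i)) \<in> borel_measurable (\<Pi>\<^sub>M i\<in>I. J)" if "i \<in> I" for i
    using measurable_compose[OF measurable_component_singleton[OF that] S] .
  have "(\<lambda>f. real (card {i \<in> I - {j}. P (f i) \<and> S (f i) \<le> S (f j)})) \<in> borel_measurable (\<Pi>\<^sub>M i\<in>I. J)"
  proof (rule borel_measurable_card_filter)
    fix i assume "i \<in> I - {j}"
    then have i: "i \<in> I" by simp
    have "Measurable.pred (\<Pi>\<^sub>M i\<in>I. J) (\<lambda>f. S (f i) \<le> S (f j))"
      unfolding pred_def by (rule borel_measurable_le[OF S_at[OF i] S_at[OF j]])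
    then show "Measurable.pred (\<Pi>\<^sub>M i\<in>I. J) (\<lambda>f. P (f i) \<and> S (f i) \<le> S (f j))"
      by (rule pred_intros_logic(3)[OF pred_PiM_component[OF i P]])
  qed (use fin in simp)
  moreover have "(\<lambda>f. real (card {i \<in> I. P (f i)})) \<in> borel_measurable (\<Pi>\<^sub>M i\<in>I. J)"
    using fin by (rule borel_measurable_card_filter) (rule pred_PiM_component[OF _ P])
  ultimately show ?thesis
    using pred_PiM_component[OF j P] unfolding rank_outlier_def pred_def
    by (intro pred_intros_logic(3)[unfolded pred_def] borel_measurable_less borel_measurable_add
        borel_measurable_times borel_measurable_const)
qed

text \<open>Exchangeability: a transposition of the coordinates preserves the product measure, so every
  index is an outlier with the same probability; averaging the counting bound over the indices
  gives the claim.\<close>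
lemma measure_rank_outlier_le:
  fixes I :: "'i set"
  assumes J: "prob_space J" and fin: "finite I" and j0: "j0 \<in> I"
    and P: "Measurable.pred J P" and S: "S \<in> borel_measurable J" and \<alpha>: "0 \<le> \<alpha>"
  defines "Q \<equiv> \<Pi>\<^sub>M i\<in>I. J"
  shows "measure Q {f \<in> space Q. rank_outlier \<alpha> P S I f j0} \<le> \<alpha> * measure Q {f \<in> space Q. P (f j0)}"
proof -
  interpret Q: prob_space Q unfolding Q_def using J by (rule prob_space_PiM)
  define Ev where "Ev j = {f \<in> space Q. rank_outlier \<alpha> P S I f j}" for j
  define Av where "Av j = {f \<in> space Q. P (f j)}" for j
  have Ev_sets: "Ev j \<in> sets Q" if "j \<in> I" for j
    using pred_rank_outlier[OF fin that P S] unfolding Ev_def Q_def pred_def .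
  have Av_sets: "Av j \<in> sets Q" if "j \<in> I" for j
    using pred_PiM_component[OF that P] unfolding Av_def Q_def pred_def .
  have same_measure: "measure Q (Ev j) = measure Q (Ev j0) \<and> measure Q (Av j) = measure Q (Av j0)"
    if j: "j \<in> I" for j
  proof -
    let ?T = "\<lambda>f. \<lambda>n\<in>I. f (Transposition.transpose j0 j n)"
    have \<pi>: "bij_betw (Transposition.transpose j0 j) I I" using j0 j by simp
    have T_space: "?T f \<in> space Q" if "f \<in> space Q" for f
      using that j0 j unfolding Q_def by (auto simp: space_PiM Transposition.transpose_def)
    have "?T -` Ev j0 \<inter> space Q = Ev j"
      using T_space by (auto simp: Ev_def rank_outlier_reindex[OF \<pi> j0])
    moreover have "?T -` Av j0 \<inter> space Q = Av j"
      using T_space j0 by (auto simp: Av_def)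
    ultimately show ?thesis
      using measure_PiM_permute[OF J \<pi>] Ev_sets[OF j0] Av_sets[OF j0] unfolding Q_def by metis
  qed
  have pointwise: "(\<Sum>j\<in>I. indicator (Ev j) f) \<le> \<alpha> * (\<Sum>j\<in>I. indicator (Av j) f :: real)"
    if "f \<in> space Q" for f
    using card_rank_outliers_le[OF fin \<alpha>, of P S f] fin that
    by (simp add: indicator_def Ev_def Av_def Int_def)
  have "real (card I) * measure Q (Ev j0) = (\<Sum>j\<in>I. measure Q (Ev j))"
    using same_measure by simp
  also have "\<dots> = (\<integral>f. (\<Sum>j\<in>I. indicator (Ev j) f) \<partial>Q)"
    using Ev_sets by (subst Bochner_Integration.integral_sum)
      (auto intro!: sum.cong simp: less_top[symmetric])
  also have "\<dots> \<le> (\<integral>f. \<alpha> * (\<Sum>j\<in>I. indicator (Av j) f) \<partial>Q)"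
    using Ev_sets Av_sets pointwise
    by (intro integral_mono) (auto simp: less_top[symmetric])
  also have "\<dots> = \<alpha> * (\<Sum>j\<in>I. measure Q (Av j))"
    using Av_sets by (subst Bochner_Integration.integral_mult_right_zero, subst Bochner_Integration.integral_sum)
      (auto intro!: sum.cong simp: less_top[symmetric])
  also have "\<dots> = real (card I) * (\<alpha> * measure Q (Av j0))"
    using same_measure by simp
  finally have "real (card I) * measure Q (Ev j0) \<le> real (card I) * (\<alpha> * measure Q (Av j0))" .
  moreover have "0 < real (card I)"
    using fin j0 card_gt_0_iff by fastforce
  ultimately show ?thesis
    unfolding Ev_def Av_def by simp
qed

lemma measure_not_rank_outlier_ge:
  fixes I :: "'i set"
  assumes J: "prob_space J" and fin: "finite I" and j0: "j0 \<in> I"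
    and P: "Measurable.pred J P" and S: "S \<in> borel_measurable J" and \<alpha>: "0 \<le> \<alpha>"
  defines "Q \<equiv> \<Pi>\<^sub>M i\<in>I. J"
  shows "measure Q {f \<in> space Q. P (f j0) \<and> \<not> rank_outlier \<alpha> P S I f j0}
    \<ge> (1 - \<alpha>) * measure Q {f \<in> space Q. P (f j0)}"
proof -
  interpret Q: prob_space Q unfolding Q_def using J by (rule prob_space_PiM)
  let ?Ev = "{f \<in> space Q. rank_outlier \<alpha> P S I f j0}"
  let ?Av = "{f \<in> space Q. P (f j0)}"
  have "?Ev \<in> sets Q"
    using pred_rank_outlier[OF fin j0 P S] unfolding Q_def pred_def .
  moreover have "?Av \<in> sets Q"
    using pred_PiM_component[OF j0 P] unfolding Q_def pred_def .
  moreover have "?Ev \<subseteq> ?Av" by (auto simp: rank_outlier_def)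
  ultimately have "measure Q (?Av - ?Ev) = measure Q ?Av - measure Q ?Ev"
    by (intro Q.finite_measure_Diff)
  moreover have "?Av - ?Ev = {f \<in> space Q. P (f j0) \<and> \<not> rank_outlier \<alpha> P S I f j0}" by auto
  moreover have "measure Q ?Ev \<le> \<alpha> * measure Q ?Av"
    unfolding Q_def using J fin j0 P S \<alpha> by (rule measure_rank_outlier_le)
  ultimately show ?thesis by (simp add: algebra_simps)
qed

lemma sets_joint_law:
  assumes "space r \<noteq> {}"
  shows "sets (joint_law r MX K) = sets (r \<Otimes>\<^sub>M MX)"
  unfolding joint_law_def by (rule sets_bind[OF _ assms]) simp

lemma space_joint_law:
  assumes "space r \<noteq> {}"
  shows "space (joint_law r MX K) = space r \<times> space MX"
  using sets_eq_imp_space_eq[OF sets_joint_law[OF assms]] by (simp add: space_pair_measure)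

lemma emeasure_joint_law_Times_space:
  assumes K_meas: "K \<in> r \<rightarrow>\<^sub>M subprob_algebra MX"
    and K_prob: "\<And>\<theta>. \<theta> \<in> space r \<Longrightarrow> prob_space (K \<theta>)"
    and r_ne: "space r \<noteq> {}" and C: "C \<in> sets r"
  shows "emeasure (joint_law r MX K) (C \<times> space MX) = emeasure r C"
proof -
  have "(\<lambda>\<theta>. distr (K \<theta>) (r \<Otimes>\<^sub>M MX) (\<lambda>x. (\<theta>, x))) \<in> r \<rightarrow>\<^sub>M subprob_algebra (r \<Otimes>\<^sub>M MX)"
    by (rule measurable_distr2[OF _ K_meas]) (simp only: case_prod_Pair, rule measurable_ident)
  then have "emeasure (joint_law r MX K) (C \<times> space MX)
      = \<integral>\<^sup>+\<theta>. emeasure (distr (K \<theta>) (r \<Otimes>\<^sub>M MX) (\<lambda>x. (\<theta>, x))) (C \<times> space MX) \<partial>r"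
    unfolding joint_law_def by (rule emeasure_bind[OF r_ne _ pair_measureI[OF C sets.top]])
  also have "\<dots> = \<integral>\<^sup>+\<theta>. indicator C \<theta> \<partial>r"
  proof (rule nn_integral_cong)
    fix \<theta> assume \<theta>: "\<theta> \<in> space r"
    then have sets_K: "sets (K \<theta>) = sets MX"
      using measurable_space[OF K_meas] by (simp add: space_subprob_algebra)
    interpret prob_space "K \<theta>" using K_prob \<theta> .
    have "(\<lambda>x. (\<theta>, x)) \<in> K \<theta> \<rightarrow>\<^sub>M r \<Otimes>\<^sub>M MX"
      using \<theta> by (simp add: measurable_cong_sets[OF sets_K refl])
    then show "emeasure (distr (K \<theta>) (r \<Otimes>\<^sub>M MX) (\<lambda>x. (\<theta>, x))) (C \<times> space MX) = indicator C \<theta>"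
      using C sets_eq_imp_space_eq[OF sets_K] emeasure_space_1
      by (simp add: emeasure_distr indicator_def vimage_def)
  qed
  also have "\<dots> = emeasure r C" using C by simp
  finally show ?thesis .
qed

lemma prob_space_joint_law:
  assumes "K \<in> r \<rightarrow>\<^sub>M subprob_algebra MX" and "\<And>\<theta>. \<theta> \<in> space r \<Longrightarrow> prob_space (K \<theta>)"
    and "prob_space r"
  shows "prob_space (joint_law r MX K)"
proof (rule prob_spaceI)
  have ne: "space r \<noteq> {}" using prob_space.not_empty[OF assms(3)] .
  show "emeasure (joint_law r MX K) (space (joint_law r MX K)) = 1"
    using emeasure_joint_law_Times_space[OF assms(1,2) ne sets.top] prob_space.emeasure_space_1[OF assms(3)]
    by (simp add: space_joint_law[OF ne])
qed

lemma pred_joint_law_fst_mem: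
  assumes "space r \<noteq> {}" and "A \<in> sets r"
  shows "Measurable.pred (joint_law r MX K) (\<lambda>p. fst p \<in> A)"
  unfolding measurable_cong_sets[OF sets_joint_law[OF assms(1)] refl]
  using assms(2) measurable_fst by (rule pred_sets2)

lemma borel_measurable_joint_law_score:
  assumes "space r \<noteq> {}" and "(\<lambda>(x, \<theta>). \<tau> x \<theta>) \<in> borel_measurable (MX \<Otimes>\<^sub>M r)"
  shows "(\<lambda>p. \<tau> (snd p) (fst p)) \<in> borel_measurable (joint_law r MX K)"
  unfolding measurable_cong_sets[OF sets_joint_law[OF assms(1)] refl]
  using measurable_comp[OF measurable_pair_swap' assms(2)] by (simp add: comp_def case_prod_unfold)

lemma measure_joint_law_fst_mem:
  assumes "K \<in> r \<rightarrow>\<^sub>M subprob_algebra MX" and "\<And>\<theta>. \<theta> \<in> space r \<Longrightarrow> prob_space (K \<theta>)"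
    and "space r \<noteq> {}" and "A \<in> sets r"
  shows "measure (joint_law r MX K) {p \<in> space (joint_law r MX K). fst p \<in> A} = measure r A"
proof -
  have "{p \<in> space (joint_law r MX K). fst p \<in> A} = A \<times> space MX"
    using sets.sets_into_space[OF assms(4)] by (auto simp: space_joint_law[OF assms(3)])
  then show ?thesis
    using emeasure_joint_law_Times_space[OF assms] by (simp add: measure_def)
qed

lemma H_hat_eq:
  "H_hat \<tau> B A s t =
     (real (card {b \<in> I_set B A s. \<tau> (snd (s b)) (fst (s b)) \<le> t}) + 1) / (real (card (I_set B A s)) + 1)"
proof -
  have "finite (I_set B A s)" by (simp add: I_set_def)
  then show ?thesis by (simp add: H_hat_def sum.If_cases Int_def)
qed

text \<open>The adjusted quantile is attained: \<open>H_hat\<close> is a nondecreasing step function that jumps only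
  at the finitely many simulated scores, so above any level where it is \<open>< \<alpha>\<close> it stays \<open>< \<alpha>\<close>
  up to the next score.\<close>
lemma C_hat_le_iff: "C_hat \<tau> \<alpha> B A s \<le> ereal t \<longleftrightarrow> \<alpha> \<le> H_hat \<tau> B A s t"
proof
  assume "\<alpha> \<le> H_hat \<tau> B A s t"
  then show "C_hat \<tau> \<alpha> B A s \<le> ereal t"
    unfolding C_hat_def by (auto intro!: Inf_lower)
next
  assume C_le: "C_hat \<tau> \<alpha> B A s \<le> ereal t"
  let ?I = "I_set B A s"
  let ?v = "\<lambda>b. \<tau> (snd (s b)) (fst (s b))"
  have fin: "finite ?I" by (simp add: I_set_def)
  show "\<alpha> \<le> H_hat \<tau> B A s t"
  proof (rule ccontr)
    assume H_less: "\<not> \<alpha> \<le> H_hat \<tau> B A s t"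
    define D where "D = ?v ` {b \<in> ?I. t < ?v b}"
    have jump: "\<exists>d\<in>D. d \<le> t'" if "\<alpha> \<le> H_hat \<tau> B A s t'" for t'
    proof (rule ccontr)
      assume "\<not> (\<exists>d\<in>D. d \<le> t')"
      then have "{b \<in> ?I. ?v b \<le> t'} \<subseteq> {b \<in> ?I. ?v b \<le> t}"
        unfolding D_def by force
      then have "card {b \<in> ?I. ?v b \<le> t'} \<le> card {b \<in> ?I. ?v b \<le> t}"
        by (rule card_mono[rotated]) (simp add: fin)
      then have "H_hat \<tau> B A s t' \<le> H_hat \<tau> B A s t"
        unfolding H_hat_eq by (simp add: divide_right_mono)
      then show False using that H_less by linarith
    qed
    show False
    proof (cases "D = {}")
      case True
      then have "{ereal t' | t'. \<alpha> \<le> H_hat \<tau> B A s t'} = {}"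
        using jump by auto
      then show False
        using C_le unfolding C_hat_def by (simp add: top_ereal_def)
    next
      case False
      have "finite D" by (simp add: D_def fin)
      then have "Min D \<in> D" and Min_le: "\<And>d. d \<in> D \<Longrightarrow> Min D \<le> d"
        using False by auto
      have "ereal (Min D) \<le> C_hat \<tau> \<alpha> B A s"
        unfolding C_hat_def using jump Min_le by (force intro!: Inf_greatest)
      also note C_le
      finally have "Min D \<le> t" by simp
      moreover have "t < Min D" using \<open>Min D \<in> D\<close> by (auto simp: D_def)
      ultimately show False by simp
    qed
  qed
qed

lemma cell_eqI:
  assumes "disjoint \<A>" and "A \<in> \<A>" and "\<theta> \<in> A"
  shows "cell \<A> \<theta> = A"
  unfolding cell_def
proof (rule the_equality)
  show "A \<in> \<A> \<and> \<theta> \<in> A" using assms(2,3) ..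
next
  fix A' assume "A' \<in> \<A> \<and> \<theta> \<in> A'"
  then show "A' = A" using assms disjointD[OF assms(1), of A' A] by blast
qed

lemma mem_R_hat_iff_not_rank_outlier:
  assumes "disjoint \<A>" and "A \<in> \<A>" and "\<theta> \<in> A" and "\<theta> \<in> space r" and "0 < \<alpha>"
  shows "\<theta> \<in> R_hat r \<A> \<tau> \<alpha> B s x \<longleftrightarrow>
    \<not> rank_outlier \<alpha> (\<lambda>p. fst p \<in> A) (\<lambda>p. \<tau> (snd p) (fst p)) (insert 0 {1..B}) (s(0 := (\<theta>, x))) 0"
proof -
  let ?s' = "s(0 := (\<theta>, x))"
  have "{i \<in> insert 0 {1..B} - {0}. fst (?s' i) \<in> A \<and> \<tau> (snd (?s' i)) (fst (?s' i)) \<le> \<tau> x \<theta>}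
      = {b \<in> I_set B A s. \<tau> (snd (s b)) (fst (s b)) \<le> \<tau> x \<theta>}"
    by (auto simp: I_set_def)
  moreover have "{i \<in> insert 0 {1..B}. fst (?s' i) \<in> A} = insert 0 (I_set B A s)"
    using assms(3) by (auto simp: I_set_def)
  moreover have "finite (I_set B A s)" and "0 \<notin> I_set B A s"
    by (auto simp: I_set_def)
  ultimately show ?thesis
    using assms cell_eqI[OF assms(1-3)]
    by (simp add: R_hat_def C_hat_le_iff H_hat_eq rank_outlier_def le_divide_eq not_less
        add_pos_nonneg add.commute)
qed

lemma measure_sample_space_fun_upd:
  fixes r :: "'t measure" and MX :: "'x measure" and K :: "'t \<Rightarrow> 'x measure" and B :: nat
  assumes J: "prob_space (joint_law r MX K)"
    and \<Phi>: "Measurable.pred (\<Pi>\<^sub>M i\<in>insert 0 {1..B}. joint_law r MX K) \<Phi>"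
  shows "measure (sample_space r MX K B)
      {\<omega> \<in> space (sample_space r MX K B). \<Phi> ((fst \<omega>)(0 := snd \<omega>))}
    = measure (\<Pi>\<^sub>M i\<in>insert 0 {1..B}. joint_law r MX K) {f \<in> space (\<Pi>\<^sub>M i\<in>insert 0 {1..B}. joint_law r MX K). \<Phi> f}"
proof -
  let ?Q = "\<Pi>\<^sub>M i\<in>insert 0 {1..B}. joint_law r MX K"
  have k: "(\<lambda>(s, y). s(0 := y)) \<in> sample_space r MX K B \<rightarrow>\<^sub>M ?Q"
    unfolding sample_space_def by (rule measurable_add_dim)
  have "{\<omega> \<in> space (sample_space r MX K B). \<Phi> ((fst \<omega>)(0 := snd \<omega>))}
      = (\<lambda>(s, y). s(0 := y)) -` {f \<in> space ?Q. \<Phi> f} \<inter> space (sample_space r MX K B)"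
    using measurable_space[OF k] by (auto simp: case_prod_unfold)
  moreover have "distr (sample_space r MX K B) ?Q (\<lambda>(s, y). s(0 := y)) = ?Q"
    unfolding sample_space_def using J by (intro distr_PiM_pair_fun_upd)
  ultimately show ?thesis
    using measure_distr[OF k \<Phi>[unfolded pred_def]] by simp
qed

lemma sample_space_covered_eq:
  fixes r :: "'t measure" and MX :: "'x measure" and K :: "'t \<Rightarrow> 'x measure" and B :: nat
  assumes "disjoint \<A>" and "A \<in> \<A>" and "0 < \<alpha>" and "space r \<noteq> {}"
  shows "{\<omega> \<in> space (sample_space r MX K B).
            fst (snd \<omega>) \<in> A \<and> fst (snd \<omega>) \<in> R_hat r \<A> \<tau> \<alpha> B (fst \<omega>) (snd (snd \<omega>))}
    = {\<omega> \<in> space (sample_space r MX K B). fst (snd \<omega>) \<in> A \<and>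
        \<not> rank_outlier \<alpha> (\<lambda>p. fst p \<in> A) (\<lambda>p. \<tau> (snd p) (fst p)) (insert 0 {1..B}) ((fst \<omega>)(0 := snd \<omega>)) 0}"
    (is "?L = ?R")
proof (intro set_eqI)
  fix \<omega> :: "(nat \<Rightarrow> 't \<times> 'x) \<times> 't \<times> 'x"
  obtain s \<theta> x where \<omega>: "\<omega> = (s, \<theta>, x)" by (cases \<omega>) auto
  have "\<theta> \<in> space r" if "\<omega> \<in> space (sample_space r MX K B)"
    using that by (auto simp: \<omega> sample_space_def space_pair_measure space_joint_law[OF assms(4)])
  then show "\<omega> \<in> ?L \<longleftrightarrow> \<omega> \<in> ?R"
    using mem_R_hat_iff_not_rank_outlier[OF assms(1,2), of \<theta> r \<alpha> \<tau> B s x] assms(3)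
    unfolding \<omega> by auto
qed

theorem theorem2:
  fixes r :: "'t measure" and MX :: "'x measure" and K :: "'t \<Rightarrow> 'x measure"
    and \<tau> :: "'x \<Rightarrow> 't \<Rightarrow> real" and \<A> :: "'t set set" and A :: "'t set"
    and B :: nat and \<alpha> :: real
  assumes r_prob: "prob_space r"
    and K_meas: "K \<in> r \<rightarrow>\<^sub>M subprob_algebra MX"
    and K_prob: "\<And>\<theta>. \<theta> \<in> space r \<Longrightarrow> prob_space (K \<theta>)"
    and \<tau>_meas: "(\<lambda>(x, \<theta>). \<tau> x \<theta>) \<in> borel_measurable (MX \<Otimes>\<^sub>M r)"
    and \<tau>_cont: "\<And>\<theta> t. \<theta> \<in> space r \<Longrightarrow> measure (K \<theta>) {x \<in> space MX. \<tau> x \<theta> = t} = 0"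
    and part_sets: "\<A> \<subseteq> sets r"
    and part_disj: "disjoint \<A>"
    and part_cover: "\<Union>\<A> = space r"
    and A_in: "A \<in> \<A>"
    and A_pos: "measure r A > 0"
    and \<alpha>_pos: "0 < \<alpha>" and \<alpha>_lt: "\<alpha> < 1"
  shows "measure (sample_space r MX K B)
           {\<omega> \<in> space (sample_space r MX K B).
              fst (snd \<omega>) \<in> A \<and> fst (snd \<omega>) \<in> R_hat r \<A> \<tau> \<alpha> B (fst \<omega>) (snd (snd \<omega>))}
         / measure (sample_space r MX K B)
           {\<omega> \<in> space (sample_space r MX K B). fst (snd \<omega>) \<in> A}
         \<ge> 1 - \<alpha>"
proof -
  let ?Q = "\<Pi>\<^sub>M i\<in>insert 0 {1..B}. joint_law r MX K"
  let ?P = "\<lambda>p. fst p \<in> A" and ?S = "\<lambda>p. \<tau> (snd p) (fst p)"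
  have r_ne: "space r \<noteq> {}" using r_prob by (rule prob_space.not_empty)
  have A_sets: "A \<in> sets r" using part_sets A_in by blast
  have J: "prob_space (joint_law r MX K)" using K_meas K_prob r_prob by (rule prob_space_joint_law)
  have P_meas: "Measurable.pred (joint_law r MX K) ?P" using r_ne A_sets by (rule pred_joint_law_fst_mem)
  have S_meas: "?S \<in> borel_measurable (joint_law r MX K)"
    using r_ne \<tau>_meas by (rule borel_measurable_joint_law_score)
  have P0_meas: "Measurable.pred ?Q (\<lambda>f. ?P (f 0))" using insertI1 P_meas by (rule pred_PiM_component)
  have "measure (sample_space r MX K B) {\<omega> \<in> space (sample_space r MX K B). fst (snd \<omega>) \<in> A}
      = measure ?Q {f \<in> space ?Q. ?P (f 0)}"
    using measure_sample_space_fun_upd[OF J P0_meas] by simp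
  also have "\<dots> = measure r A"
    using measure_PiM_component_pred[OF J insertI1 P_meas] measure_joint_law_fst_mem[OF K_meas K_prob r_ne A_sets]
    by simp
  moreover have "measure (sample_space r MX K B)
      {\<omega> \<in> space (sample_space r MX K B). fst (snd \<omega>) \<in> A \<and> fst (snd \<omega>) \<in> R_hat r \<A> \<tau> \<alpha> B (fst \<omega>) (snd (snd \<omega>))}
      = measure ?Q {f \<in> space ?Q. ?P (f 0) \<and> \<not> rank_outlier \<alpha> ?P ?S (insert 0 {1..B}) f 0}"
    unfolding sample_space_covered_eq[OF part_disj A_in \<alpha>_pos r_ne]
    using measure_sample_space_fun_upd[OF J pred_intros_logic(3)[OF P0_meas
        pred_intros_logic(2)[OF pred_rank_outlier[OF _ insertI1 P_meas S_meas]]]]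
    by simp
  moreover have "(1 - \<alpha>) * measure ?Q {f \<in> space ?Q. ?P (f 0)}
      \<le> measure ?Q {f \<in> space ?Q. ?P (f 0) \<and> \<not> rank_outlier \<alpha> ?P ?S (insert 0 {1..B}) f 0}"
    using J _ insertI1 P_meas S_meas less_imp_le[OF \<alpha>_pos] by (rule measure_not_rank_outlier_ge) simp
  ultimately show ?thesis
    using A_pos by (simp add: pos_le_divide_eq)
qed

end
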